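(* Let $f^+,f^-:[0,1]\to[0,1]$ satisfy $f^+(0)=f^-(0)=0$, and let $\alpha>0$. Suppose that $ALG(uvw)\le\alpha\,LP(uvw)$ for every triangle of every sign pattern in $\{+,-\}^3$ (i.e. $(+,+,+)$, $(+,+,-)$, $(+,-,-)$, $(-,-,-)$) and every choice of edge lengths in $[0,1]$ satisfying the triangle inequalities. Then $\alpha>2.025$.
   Context: A triangle $uvw$ has pairs $uv,vw,uw$, each a positive ($+$) or negative ($-$) edge with length $x_e\in[0,1]$; triangle inequalities: each length is at most the sum of the other two. Let $p_e=f^+(x_e)$ for positive and $p_e=f^-(x_e)$ for negative edges. For a pair $(u,v)$ with third vertex $w$: $e.cost_w(u,v)=p_{uw}(1-p_{vw})+(1-p_{uw})p_{vw}$ if $(u,v)$ is positive, $(1-p_{uw})(1-p_{vw})$ if negative; $e.lp_w(u,v)=(1-p_{uw}p_{vw})x_{uv}$ if positive, $(1-p_{uw}p_{vw})(1-x_{uv})$ if negative. $ALG(uvw)=e.cost_w(u,v)+e.cost_v(w,u)+e.cost_u(v,w)$, $LP(uvw)=e.lp_w(u,v)+e.lp_v(w,u)+e.lp_u(v,w)$. (These are the per-triangle quantities of the pivot rounding algorithm for correlation clustering on complete graphs, which cuts a positive edge to the pivot with probability $f^+$ of its LP length and a negative one with probability $f^-$ of its LP length.) *)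

theory Defs
  imports Complex_Main
begin

(* Edge signs: True = positive edge (+), False = negative edge (-). *)

definition rprob :: "(real \<Rightarrow> real) \<Rightarrow> (real \<Rightarrow> real) \<Rightarrow> bool \<Rightarrow> real \<Rightarrow> real" where
  "rprob fp fm s x = (if s then fp x else fm x)"

(* e.cost_w(u,v): s = sign of (u,v), a = p_uw, b = p_vw *)
definition ecost :: "bool \<Rightarrow> real \<Rightarrow> real \<Rightarrow> real" where
  "ecost s a b = (if s then a * (1 - b) + (1 - a) * b else (1 - a) * (1 - b))"

(* e.lp_w(u,v): s = sign of (u,v), a = p_uw, b = p_vw, x = x_uv *)
definition elp :: "bool \<Rightarrow> real \<Rightarrow> real \<Rightarrow> real \<Rightarrow> real" where
  "elp s a b x = (if s then (1 - a * b) * x else (1 - a * b) * (1 - x))"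

definition ALG :: "(real \<Rightarrow> real) \<Rightarrow> (real \<Rightarrow> real) \<Rightarrow> bool \<Rightarrow> bool \<Rightarrow> bool \<Rightarrow> real \<Rightarrow> real \<Rightarrow> real \<Rightarrow> real" where
  "ALG fp fm suv svw suw xuv xvw xuw =
     (let puv = rprob fp fm suv xuv; pvw = rprob fp fm svw xvw; puw = rprob fp fm suw xuw in
      ecost suv puw pvw + ecost suw pvw puv + ecost svw puv puw)"

definition LP :: "(real \<Rightarrow> real) \<Rightarrow> (real \<Rightarrow> real) \<Rightarrow> bool \<Rightarrow> bool \<Rightarrow> bool \<Rightarrow> real \<Rightarrow> real \<Rightarrow> real \<Rightarrow> real" where
  "LP fp fm suv svw suw xuv xvw xuw =
     (let puv = rprob fp fm suv xuv; pvw = rprob fp fm svw xvw; puw = rprob fp fm suw xuw in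
      elp suv puw pvw xuv + elp suw pvw puv xuw + elp svw puv puw xvw)"

definition valid_lengths :: "real \<Rightarrow> real \<Rightarrow> real \<Rightarrow> bool" where
  "valid_lengths xuv xvw xuw \<longleftrightarrow>
     xuv \<in> {0..1} \<and> xvw \<in> {0..1} \<and> xuw \<in> {0..1} \<and>
     xuv \<le> xvw + xuw \<and> xvw \<le> xuv + xuw \<and> xuw \<le> xuv + xvw"

end

theory Submission
  imports Defs
begin

text \<open>Assuming \<open>\<alpha> \<le> 81/40\<close>, test triangles of the four sign patterns successively force
  \<open>f\<^sup>-(1) = 1\<close>, \<open>f\<^sup>+(1/2) \<ge> 39/40\<close>, \<open>f\<^sup>+(1/10) \<le> 81/400\<close>, \<open>f\<^sup>-(4/5) \<ge> 77/100\<close> and then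
  \<open>f\<^sup>+(2/5) \<le> 31/100\<close>, while the \<open>(+,+,-)\<close> triangle with lengths \<open>2/5, 2/5, 4/5\<close> needs
  \<open>f\<^sup>+(2/5) > 31/100\<close>. Each step is a polynomial inequality in at most three values of
  \<open>f\<^sup>\<plusminus>\<close>, closed by a linear combination with products of the previous bounds.\<close>

lemmas triangle_defs = ALG_def LP_def rprob_def ecost_def elp_def Let_def

lemma elp_nonneg:
  assumes "a \<in> {0..1}" "b \<in> {0..1}" "x \<in> {0..1}"
  shows "0 \<le> elp s a b x"
proof -
  have "a * b \<le> 1" using assms by (auto intro: mult_le_one)
  then show ?thesis using assms by (simp add: elp_def)
qed

lemma LP_nonneg:
  assumes "\<forall>x\<in>{0..1}. fp x \<in> {0..1}" "\<forall>x\<in>{0..1}. fm x \<in> {0..1}"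
    and "valid_lengths xuv xvw xuw"
  shows "0 \<le> LP fp fm suv svw suw xuv xvw xuw"
proof -
  have "rprob fp fm s x \<in> {0..1}" if "x \<in> {0..1}" for s x
    using assms(1,2) that by (simp add: rprob_def)
  then show ?thesis
    using assms(3) by (simp add: LP_def Let_def valid_lengths_def elp_nonneg add_nonneg_nonneg)
qed

lemma fm_one_eq_one:
  assumes "ALG fp fm False False False 1 1 1 \<le> \<alpha> * LP fp fm False False False 1 1 1"
  shows "fm 1 = 1"
proof -
  have "3 * (1 - fm 1)\<^sup>2 \<le> 0"
    using assms by (simp add: triangle_defs power2_eq_square)
  then show ?thesis by simp
qed

lemma fp_half_lower_bound:
  assumes "fp (1/2) \<le> 1" "fm 1 = 1"
    and "ALG fp fm True True False (1/2) (1/2) 1 \<le> \<alpha> * LP fp fm True True False (1/2) (1/2) 1"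
  shows "fp (1/2) = 1 \<or> 3 - \<alpha> \<le> fp (1/2)"
proof -
  let ?a = "fp (1/2)"
  have "(1 - ?a) * (3 - ?a) \<le> \<alpha> * (1 - ?a)"
    using assms(2,3) by (simp add: triangle_defs algebra_simps)
  then show ?thesis
    using assms(1) by (cases "?a = 1") (auto simp: mult.commute)
qed

lemma fp_tenth_upper_bound:
  assumes "fp 0 = 0" "0 \<le> fp (1/10)" "fp (1/10) \<le> 1"
    and "ALG fp fm True True True 0 (1/10) (1/10) \<le> \<alpha> * LP fp fm True True True 0 (1/10) (1/10)"
  shows "fp (1/10) \<le> \<alpha> / 10"
proof -
  let ?c = "fp (1/10)"
  have "2 * ?c * (2 - ?c) \<le> \<alpha> / 5"
    using assms(1,4) by (simp add: triangle_defs algebra_simps)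
  moreover have "2 * ?c \<le> 2 * ?c * (2 - ?c)"
    using assms(2,3) mult_left_mono[of 1 "2 - ?c" "2 * ?c"] by simp
  ultimately show ?thesis by simp
qed

lemma fm_four_fifths_lower_bound:
  assumes "fp 0 = 0"
    and "ALG fp fm True False False 0 (4/5) (4/5) \<le> \<alpha> * LP fp fm True False False 0 (4/5) (4/5)"
  shows "1 - \<alpha> / 5 \<le> (fm (4/5))\<^sup>2"
  using assms by (simp add: triangle_defs algebra_simps power2_eq_square)

lemma fp_two_fifths_upper_bound:
  assumes "39/40 \<le> fp (1/2)" "fp (1/2) \<le> 1" "0 \<le> fp (1/10)" "fp (1/10) \<le> 81/400"
    and "ALG fp fm True True True (1/2) (2/5) (1/10) \<le>
      81/40 * LP fp fm True True True (1/2) (2/5) (1/10)"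
  shows "fp (2/5) \<le> 31/100"
proof (rule ccontr)
  define a b c where "a = fp (1/2)" and "b = fp (2/5)" and "c = fp (1/10)"
  assume "\<not> fp (2/5) \<le> 31/100"
  then have b: "31/100 \<le> b" unfolding b_def by simp
  have a: "39/40 \<le> a" "a \<le> 1" and c: "0 \<le> c" "c \<le> 81/400"
    using assms(1-4) unfolding a_def c_def by simp_all
  have "2 * a + 2 * b + 2 * c - 2 * (a * b) - 2 * (b * c) - 2 * (a * c) \<le>
      81/40 - 81/80 * (b * c) - 81/400 * (a * b) - 81/100 * (a * c)"
    using assms(5) unfolding a_def b_def c_def by (simp add: triangle_defs field_simps)
  moreover have "0 \<le> (b - 31/100) * (2 - 719/400 * a - 79/80 * c)"
    using a c b by simp
  moreover have "0 \<le> c * (847/500 - 119/100 * a)"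
    using a c by simp
  ultimately show False
    using a c by (simp add: field_simps)
qed

lemma fp_two_fifths_lower_bound:
  assumes "77/100 \<le> fm (4/5)"
    and "ALG fp fm True True False (2/5) (2/5) (4/5) \<le>
      81/40 * LP fp fm True True False (2/5) (2/5) (4/5)"
  shows "31/100 < fp (2/5)"
proof (rule ccontr)
  define b q where "b = fp (2/5)" and "q = fm (4/5)"
  assume "\<not> 31/100 < fp (2/5)"
  then have b: "b \<le> 31/100" unfolding b_def by simp
  have q: "77/100 \<le> q" using assms(1) unfolding q_def .
  have "2 * q - 4 * (b * q) + 1 + b * b \<le> 81/40 - 81/50 * (b * q) - 81/200 * (b * b)"
    using assms(2) unfolding b_def q_def by (simp add: triangle_defs field_simps)
  moreover have "0 \<le> (q - 77/100) * (2 - 119/50 * b)"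
    using b q by simp
  moreover have "0 \<le> (31/100 - b) * (89/100 - b)"
    using b by simp
  ultimately show False
    using b by (simp add: field_simps)
qed

theorem theorem7:
  fixes fp fm :: "real \<Rightarrow> real" and \<alpha> :: real
  assumes "\<forall>x\<in>{0..1}. fp x \<in> {0..1}"
    and "\<forall>x\<in>{0..1}. fm x \<in> {0..1}"
    and "fp 0 = 0" and "fm 0 = 0"
    and "\<alpha> > 0"
    and "\<forall>suv svw suw xuv xvw xuw. valid_lengths xuv xvw xuw \<longrightarrow>
           ALG fp fm suv svw suw xuv xvw xuw \<le> \<alpha> * LP fp fm suv svw suw xuv xvw xuw"
  shows "\<alpha> > 2.025"
proof (rule ccontr)
  assume "\<not> \<alpha> > 2.025"
  then have \<alpha>: "\<alpha> \<le> 81/40" by simp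
  have tri: "ALG fp fm suv svw suw xuv xvw xuw \<le> \<alpha> * LP fp fm suv svw suw xuv xvw xuw"
    if "valid_lengths xuv xvw xuw" for suv svw suw xuv xvw xuw
    using assms(6) that by blast
  have tri81: "ALG fp fm suv svw suw xuv xvw xuw \<le> 81/40 * LP fp fm suv svw suw xuv xvw xuw"
    if "valid_lengths xuv xvw xuw" for suv svw suw xuv xvw xuw
    using tri[OF that] mult_right_mono[OF \<alpha> LP_nonneg[OF assms(1,2) that]] by (rule order_trans)
  have range: "fp (1/2) \<le> 1" "0 \<le> fp (1/10)" "fp (1/10) \<le> 1" "fm (4/5) \<ge> 0"
    using assms(1,2) by auto
  have "fm 1 = 1"
    by (rule fm_one_eq_one, rule tri) (simp add: valid_lengths_def)
  then have "39/40 \<le> fp (1/2)"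
    using fp_half_lower_bound[OF range(1) _ tri] \<alpha> by (auto simp: valid_lengths_def)
  moreover have "fp (1/10) \<le> 81/400"
    using fp_tenth_upper_bound[OF assms(3) range(2,3) tri] \<alpha> by (simp add: valid_lengths_def)
  ultimately have "fp (2/5) \<le> 31/100"
    using fp_two_fifths_upper_bound[OF _ range(1,2) _ tri81] by (simp add: valid_lengths_def)
  moreover have "(77/100)\<^sup>2 < (fm (4/5))\<^sup>2"
    using fm_four_fifths_lower_bound[OF assms(3) tri] \<alpha>
    by (simp add: valid_lengths_def power2_eq_square)
  then have "77/100 \<le> fm (4/5)"
    using range(4) by (auto dest: power_less_imp_less_base)
  ultimately show False
    using fp_two_fifths_lower_bound[OF _ tri81] by (simp add: valid_lengths_def)
qed

end
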